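(* Let $(\Omega,\mathcal F,\mathbb P)$ be a probability space carrying a group of measurable bijections $\{\theta_n\}_{n\in\mathbb Z}$ each preserving $\mathbb P$, and let $\{a_n\}_{n\in\mathbb Z}$ be i.i.d. flow-compatible random variables with values in $\{1,2,\dots\}$, with $\mathbb E[a_0]<\infty$ and $\mathbb P[a_0=1]>0$. Let $f(n)=n+a_n$, let $\Phi^s$ be the set of successful integers and $\Phi^e$ the set of ephemeral integers. Then the intensity of $\Phi^s$ is $$\lambda^s=\mathbb P[0\in\Phi^s]=\frac{1}{\mathbb E[a_0]},$$ and the intensity of $\Phi^e$ is $\lambda^e=\mathbb P[0\in\Phi^e]=1-\frac{1}{\mathbb E[a_0]}$.
   Context: For $n\in\mathbb Z$, the set of descendants of $n$ is $D(n)=\{m\in\mathbb Z:\exists\, j\ge 0,\ f^j(m)=n\}$, where $f^j$ is the $j$-th iterate of $f$. An integer $n$ is successful if $D(n)$ is infinite and ephemeral if $D(n)$ is finite; $\Phi^s$ and $\Phi^e$ are the corresponding random subsets of $\mathbb Z$ (they are stationary point processes, being flow-compatible). *)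

theory Defs
  imports "HOL-Probability.Probability"
begin

text \<open>The map f(n) = n + a_n for a fixed sample point (a is the realised sequence).\<close>
definition succ_map :: "(int \<Rightarrow> nat) \<Rightarrow> int \<Rightarrow> int" where
  "succ_map a n = n + int (a n)"

definition descendants :: "(int \<Rightarrow> int) \<Rightarrow> int \<Rightarrow> int set" where
  "descendants f n = {m. \<exists>j. (f ^^ j) m = n}"

definition successful :: "(int \<Rightarrow> int) \<Rightarrow> int \<Rightarrow> bool" where
  "successful f n \<longleftrightarrow> infinite (descendants f n)"

definition ephemeral :: "(int \<Rightarrow> int) \<Rightarrow> int \<Rightarrow> bool" where
  "ephemeral f n \<longleftrightarrow> finite (descendants f n)"

end

theory Submission
  imports Defs
begin

(* Write f n = n + a n and call the jump n -> f n crossing 0 if n <= 0 < f n.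
   Since E a 0 is finite, Borel-Cantelli shows that almost surely only finitely
   many jumps cross 0, and since every site m <= 0 eventually jumps over 0, one of
   them is successful.  At most one of them is: the expected number of successful
   preimages of 1 equals P(0 successful) = P(1 successful), so almost surely no
   site has two successful preimages; but two successful crossing jumps landing at
   x < y would produce such a collision on the event that a i = 1 for x <= i < y,
   which is independent of them and has positive probability.  So exactly one
   successful jump crosses 0, and the site -j provides it iff -j is successful and
   a (-j) > j.  Taking expectations, and using stationarity together with the
   independence of "0 is successful" (a function of the a i, i < 0) from a 0,
   gives 1 = sum_j P(0 successful) P(a 0 > j) = P(0 successful) E a 0. *)

section \<open>Orbits of strictly increasing maps on the integers\<close>

lemma strict_mono_orbit:
  fixes f :: "int \<Rightarrow> int"
  assumes "\<And>n. n < f n"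
  shows "strict_mono (\<lambda>j. (f ^^ j) m)"
  by (rule strict_monoI_Suc) (simp add: assms)

lemma orbit_ge_add:
  fixes f :: "int \<Rightarrow> int"
  assumes "\<And>n. n < f n"
  shows "m + int j \<le> (f ^^ j) m"
proof (induction j)
  case (Suc j)
  then show ?case using assms[of "(f ^^ j) m"] by simp
qed simp

lemma descendants_le:
  fixes f :: "int \<Rightarrow> int"
  assumes "\<And>n. n < f n" and "m \<in> descendants f n"
  shows "m \<le> n"
proof -
  obtain j where "(f ^^ j) m = n" using assms(2) unfolding descendants_def by blast
  then show ?thesis using orbit_ge_add[OF assms(1), of m j] by simp
qed

lemma self_in_descendants: "n \<in> descendants f n"
  unfolding descendants_def by (auto intro: exI[of _ 0])

lemma descendants_eq_insert_preimages:
  "descendants f n = insert n (\<Union>u\<in>f -` {n}. descendants f u)"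
proof (intro equalityI subsetI)
  fix m assume "m \<in> descendants f n"
  then obtain j where j: "(f ^^ j) m = n" unfolding descendants_def by blast
  show "m \<in> insert n (\<Union>u\<in>f -` {n}. descendants f u)"
  proof (cases j)
    case (Suc i)
    then have "(f ^^ i) m \<in> f -` {n}" using j by simp
    then show ?thesis unfolding descendants_def by blast
  qed (use j in simp)
next
  fix m assume "m \<in> insert n (\<Union>u\<in>f -` {n}. descendants f u)"
  then show "m \<in> descendants f n"
  proof
    assume "m \<in> (\<Union>u\<in>f -` {n}. descendants f u)"
    then obtain u j where "f u = n" "(f ^^ j) m = u" unfolding descendants_def by blast
    then have "(f ^^ Suc j) m = n" by simp
    then show ?thesis unfolding descendants_def by blast
  qed (simp add: self_in_descendants)
qed

lemma successful_image:
  assumes "successful f n"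
  shows "successful f (f n)"
proof -
  have "descendants f n \<subseteq> descendants f (f n)"
    by (subst (2) descendants_eq_insert_preimages) auto
  then show ?thesis using assms unfolding successful_def using finite_subset by blast
qed

lemma successful_funpow: "successful f n \<Longrightarrow> successful f ((f ^^ i) n)"
  by (induction i) (auto intro: successful_image)

lemma successful_preimage:
  assumes "finite (f -` {n})" and "successful f n"
  shows "\<exists>u. f u = n \<and> successful f u"
  using assms descendants_eq_insert_preimages[of f n]
  unfolding successful_def by (metis finite_UN finite_insert vimage_singleton_eq)

lemma infinite_int_set_iff_unbounded_below:
  fixes S :: "int set"
  assumes "S \<subseteq> {..n}"
  shows "infinite S \<longleftrightarrow> (\<forall>K. \<exists>m\<in>S. m \<le> K)"
proof
  assume "infinite S"
  show "\<forall>K. \<exists>m\<in>S. m \<le> K"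
  proof (rule ccontr)
    assume "\<not> (\<forall>K. \<exists>m\<in>S. m \<le> K)"
    then obtain K where "\<forall>m\<in>S. K < m" by (auto simp: not_le)
    then have "S \<subseteq> {K..n}" using assms by force
    then show False using \<open>infinite S\<close> finite_subset by blast
  qed
next
  assume unbounded: "\<forall>K. \<exists>m\<in>S. m \<le> K"
  show "infinite S"
  proof
    assume "finite S"
    moreover obtain m where "m \<in> S" "m \<le> Min S - 1" using unbounded by blast
    ultimately show False using Min_le by fastforce
  qed
qed

lemma successful_iff_unbounded:
  fixes f :: "int \<Rightarrow> int"
  assumes "\<And>n. n < f n"
  shows "successful f n \<longleftrightarrow> (\<forall>K. \<exists>m\<le>K. \<exists>j. (f ^^ j) m = n)"
proof -
  have "descendants f n \<subseteq> {..n}" using descendants_le[OF assms] by blast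
  then have "successful f n \<longleftrightarrow> (\<forall>K. \<exists>m\<in>descendants f n. m \<le> K)"
    unfolding successful_def by (rule infinite_int_set_iff_unbounded_below)
  then show ?thesis unfolding descendants_def by blast
qed

definition crossing :: "(int \<Rightarrow> int) \<Rightarrow> int \<Rightarrow> int set" where
  "crossing f k = {n. n \<le> k \<and> k < f n}"

lemma preimage_subset_crossing:
  fixes f :: "int \<Rightarrow> int"
  assumes "\<And>n. n < f n"
  shows "f -` {k + 1} \<subseteq> crossing f k"
proof
  fix u assume "u \<in> f -` {k + 1}"
  then show "u \<in> crossing f k" using assms[of u] unfolding crossing_def by simp
qed

lemma orbit_meets_crossing:
  fixes f :: "int \<Rightarrow> int"
  assumes "\<And>n. n < f n" and "m \<le> k"
  shows "\<exists>j. (f ^^ j) m \<in> crossing f k"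
proof -
  have "\<exists>j. k < (f ^^ j) m"
    using orbit_ge_add[OF assms(1), of m "nat (k - m + 1)"] assms(2)
    by (intro exI[of _ "nat (k - m + 1)"]) simp
  then obtain j where j: "k < (f ^^ j) m" "\<And>i. i < j \<Longrightarrow> \<not> k < (f ^^ i) m"
    using exists_least_iff[where P = "\<lambda>j. k < (f ^^ j) m"] by blast
  then obtain i where "j = Suc i" using assms(2) by (cases j) auto
  then have "(f ^^ i) m \<in> crossing f k" using j(1) j(2)[of i] unfolding crossing_def by auto
  then show ?thesis by blast
qed

lemma crossing_has_successful:
  fixes f :: "int \<Rightarrow> int"
  assumes "\<And>n. n < f n" and "finite (crossing f k)"
  shows "\<exists>n\<in>crossing f k. successful f n"
proof (rule ccontr)
  assume "\<not> ?thesis"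
  then have "finite (\<Union>n\<in>crossing f k. descendants f n)"
    using assms(2) unfolding successful_def by blast
  moreover have "{..k} \<subseteq> (\<Union>n\<in>crossing f k. descendants f n)"
    using orbit_meets_crossing[OF assms(1)] unfolding descendants_def by blast
  ultimately show False using infinite_Iic finite_subset by blast
qed

lemma orbits_merge:
  assumes "(f ^^ i) u = (f ^^ j) v"
    and "\<And>j. (f ^^ j) v \<noteq> u" and "\<And>i. (f ^^ i) u \<noteq> v"
  shows "\<exists>i' j'. (f ^^ i') u \<noteq> (f ^^ j') v \<and> f ((f ^^ i') u) = f ((f ^^ j') v)"
  using assms(1)
proof (induction i arbitrary: j)
  case 0
  then show ?case using assms(2) by (metis funpow_0)
next
  case (Suc i)
  obtain j' where j: "j = Suc j'" using Suc.prems assms(3)[of "Suc i"] by (cases j) auto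
  show ?case
  proof (cases "(f ^^ i) u = (f ^^ j') v")
    case True
    then show ?thesis using Suc.IH by blast
  next
    case False
    then show ?thesis using Suc.prems j by auto
  qed
qed

lemma crossing_orbit_avoids:
  fixes f :: "int \<Rightarrow> int"
  assumes "\<And>n. n < f n" and "u \<in> crossing f k" "v \<in> crossing f k" "u \<noteq> v"
  shows "(f ^^ j) v \<noteq> u"
proof (cases j)
  case (Suc i)
  have "(\<lambda>j. (f ^^ j) v) 1 \<le> (\<lambda>j. (f ^^ j) v) j"
    by (rule monoD[OF strict_mono_mono[OF strict_mono_orbit[OF assms(1)]]]) (simp add: Suc)
  then have "f v \<le> (f ^^ j) v" by simp
  then show ?thesis using assms(2,3) unfolding crossing_def by auto
qed (use assms(4) in simp)

lemma crossing_orbits_merge: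
  fixes f :: "int \<Rightarrow> int"
  assumes "\<And>n. n < f n" and "u \<in> crossing f k" "v \<in> crossing f k" "u \<noteq> v"
    and "successful f u" "successful f v" and "(f ^^ i) u = (f ^^ j) v"
  shows "\<exists>u' v'. u' \<noteq> v' \<and> successful f u' \<and> successful f v' \<and> f u' = f v'"
proof -
  obtain i' j' where "(f ^^ i') u \<noteq> (f ^^ j') v" "f ((f ^^ i') u) = f ((f ^^ j') v)"
    using orbits_merge[OF assms(7) crossing_orbit_avoids[OF assms(1-4)]
        crossing_orbit_avoids[OF assms(1,3,2)]] assms(4) by metis
  then show ?thesis using successful_funpow assms(5,6) by blast
qed

section \<open>Jump maps\<close>

lemma succ_map_gt: "(\<And>n. 1 \<le> A n) \<Longrightarrow> n < succ_map A n"
  by (simp add: succ_map_def Suc_le_eq)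

lemma succ_map_funpow_ones:
  assumes "\<And>i. lo \<le> i \<Longrightarrow> i < lo + int d \<Longrightarrow> A i = 1"
  shows "(succ_map A ^^ d) lo = lo + int d"
  using assms by (induction d) (simp_all add: succ_map_def)

lemma succ_map_shift_funpow:
  "(succ_map (\<lambda>m. A (m + k)) ^^ j) m = (succ_map A ^^ j) (m + k) - k"
  by (induction j) (simp_all add: succ_map_def)

lemma successful_succ_map_shift:
  "successful (succ_map (\<lambda>m. A (m + k))) n \<longleftrightarrow> successful (succ_map A) (n + k)"
proof -
  have "descendants (succ_map (\<lambda>m. A (m + k))) n = (\<lambda>x. x + k) -` descendants (succ_map A) (n + k)"
    unfolding descendants_def succ_map_shift_funpow by (simp add: diff_eq_eq)
  moreover have "bij (\<lambda>x::int. x + k)"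
    by (rule bijI') (auto intro: exI[of _ "_ - k"])
  ultimately show ?thesis unfolding successful_def by (simp add: finite_vimage_iff)
qed

lemma descendants_subset_if_agree_below:
  fixes f g :: "int \<Rightarrow> int"
  assumes "\<And>n. n < f n" and agree: "\<And>m. m < n \<Longrightarrow> f m = g m"
  shows "descendants f n \<subseteq> descendants g n"
proof
  fix m assume "m \<in> descendants f n"
  then obtain j where j: "(f ^^ j) m = n" unfolding descendants_def by blast
  have "i \<le> j \<Longrightarrow> (g ^^ i) m = (f ^^ i) m" for i
  proof (induction i)
    case (Suc i)
    have "(f ^^ i) m < n"
      using strict_monoD[OF strict_mono_orbit[OF assms(1)], of i j m] Suc.prems j by simp
    then show ?case using Suc agree by simp
  qed simp
  then have "(g ^^ j) m = n" using j by simp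
  then show "m \<in> descendants g n" unfolding descendants_def by blast
qed

lemma successful_cong_below:
  fixes f g :: "int \<Rightarrow> int"
  assumes "\<And>n. n < f n" "\<And>n. n < g n" and "\<And>m. m < n \<Longrightarrow> f m = g m"
  shows "successful f n \<longleftrightarrow> successful g n"
proof -
  have "descendants f n = descendants g n"
    using descendants_subset_if_agree_below[of f n g] descendants_subset_if_agree_below[of g n f]
      assms by (simp add: subset_antisym)
  then show ?thesis unfolding successful_def by simp
qed

lemma measurable_succ_map_funpow:
  assumes "\<And>n. b n \<in> measurable N (count_space UNIV)"
  shows "(\<lambda>x. (succ_map (\<lambda>n. b n x) ^^ j) m) \<in> measurable N (count_space UNIV)"
proof (induction j)
  case (Suc j)
  have "(\<lambda>x. i + int (b i x)) \<in> measurable N (count_space UNIV)" for i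
    by (rule measurable_compose[OF assms measurable_count_space])
  then have "(\<lambda>x. (\<lambda>i x. i + int (b i x)) ((succ_map (\<lambda>n. b n x) ^^ j) m) x)
      \<in> measurable N (count_space UNIV)"
    by (rule measurable_compose_countable[OF _ Suc.IH])
  moreover have "(succ_map (\<lambda>n. b n x) ^^ Suc j) m
      = (\<lambda>i x. i + int (b i x)) ((succ_map (\<lambda>n. b n x) ^^ j) m) x" for x
    by (simp only: funpow.simps comp_apply) (rule succ_map_def)
  ultimately show ?case by simp
qed simp

lemma sets_successful:
  assumes "\<And>n. b n \<in> measurable N (count_space UNIV)"
    and "\<And>n x. x \<in> space N \<Longrightarrow> 1 \<le> b n x"
  shows "{x \<in> space N. successful (succ_map (\<lambda>n. b n x)) k} \<in> sets N"
proof -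
  have "Measurable.pred N (\<lambda>x. \<forall>K. \<exists>m\<le>K. \<exists>j. (succ_map (\<lambda>n. b n x) ^^ j) m = k)"
    using measurable_succ_map_funpow[OF assms(1)]
    by (intro pred_intros_countable pred_intros_logic(3) measurable_const pred_count_space_const1) auto
  moreover have "successful (succ_map (\<lambda>n. b n x)) k
      \<longleftrightarrow> (\<forall>K. \<exists>m\<le>K. \<exists>j. (succ_map (\<lambda>n. b n x) ^^ j) m = k)" if "x \<in> space N" for x
    using assms(2)[OF that] by (intro successful_iff_unbounded succ_map_gt)
  then have "{x \<in> space N. successful (succ_map (\<lambda>n. b n x)) k}
      = {x \<in> space N. \<forall>K. \<exists>m\<le>K. \<exists>j. (succ_map (\<lambda>n. b n x) ^^ j) m = k}"
    by blast
  ultimately show ?thesis unfolding pred_def by simp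
qed

section \<open>Flow-compatible i.i.d. jumps\<close>

locale iid_jump_flow = prob_space M for M :: "'w measure" +
  fixes \<theta> :: "int \<Rightarrow> 'w \<Rightarrow> 'w" and a :: "int \<Rightarrow> 'w \<Rightarrow> nat"
  assumes flow_meas: "\<And>n. \<theta> n \<in> measurable M M"
    and flow_pres: "\<And>n. distr M M (\<theta> n) = M"
    and flow_add: "\<And>m n w. w \<in> space M \<Longrightarrow> \<theta> (m + n) w = \<theta> m (\<theta> n w)"
    and a_meas: "\<And>n. a n \<in> measurable M (count_space UNIV)"
    and a_compat: "\<And>n w. w \<in> space M \<Longrightarrow> a n w = a 0 (\<theta> n w)"
    and a_indep: "indep_vars (\<lambda>_. count_space UNIV) a UNIV"
    and a_pos: "\<And>n w. w \<in> space M \<Longrightarrow> 1 \<le> a n w"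
    and a_int: "integrable M (\<lambda>w. real (a 0 w))"
    and a_one: "0 < prob {w \<in> space M. a 0 w = 1}"
begin

abbreviation forward :: "'w \<Rightarrow> int \<Rightarrow> int" where
  "forward w \<equiv> succ_map (\<lambda>n. a n w)"

lemma forward_gt: "w \<in> space M \<Longrightarrow> n < forward w n"
  using a_pos by (intro succ_map_gt)

lemma a_flow_shift: "w \<in> space M \<Longrightarrow> a n (\<theta> k w) = a (n + k) w"
  using a_compat flow_add measurable_space[OF flow_meas] by metis

lemma successful_flow_shift:
  assumes "w \<in> space M"
  shows "successful (forward (\<theta> k w)) n \<longleftrightarrow> successful (forward w) (n + k)"
proof -
  have "(\<lambda>m. a m (\<theta> k w)) = (\<lambda>m. a (m + k) w)" using a_flow_shift[OF assms] by simp
  then show ?thesis using successful_succ_map_shift[of "\<lambda>m. a m w" k n] by simp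
qed

lemma emeasure_flow_shift:
  assumes "{w \<in> space M. P w} \<in> sets M" and "\<And>w. w \<in> space M \<Longrightarrow> P (\<theta> k w) \<longleftrightarrow> Q w"
  shows "emeasure M {w \<in> space M. Q w} = emeasure M {w \<in> space M. P w}"
proof -
  have "\<theta> k -` {w \<in> space M. P w} \<inter> space M = {w \<in> space M. Q w}"
    using assms(2) measurable_space[OF flow_meas] by auto
  then show ?thesis
    using emeasure_distr[OF flow_meas assms(1), of k] flow_pres[of k] by simp
qed

lemma pred_a_event: "Measurable.pred M (\<lambda>w. P (a n w))"
  by (rule measurable_compose[OF a_meas]) simp

lemma sets_a_event: "{w \<in> space M. P (a n w)} \<in> sets M"
  using pred_a_event unfolding pred_def .

lemma emeasure_a_event: "emeasure M {w \<in> space M. P (a n w)} = emeasure M {w \<in> space M. P (a 0 w)}"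
  by (rule emeasure_flow_shift[OF sets_a_event]) (simp add: a_compat)

lemma pred_successful_event: "Measurable.pred M (\<lambda>w. successful (forward w) n)"
  unfolding pred_def by (rule sets_successful[OF a_meas a_pos])

lemma sets_successful_event: "{w \<in> space M. successful (forward w) n} \<in> sets M"
  using pred_successful_event unfolding pred_def .

lemma sets_successful_a_event: "{w \<in> space M. successful (forward w) n \<and> P (a m w)} \<in> sets M"
  using pred_intros_logic(3)[OF pred_successful_event pred_a_event] unfolding pred_def .

lemma emeasure_successful_a_event:
  "emeasure M {w \<in> space M. successful (forward w) k \<and> P (a k w)}
     = emeasure M {w \<in> space M. successful (forward w) 0 \<and> P (a 0 w)}"
proof (rule emeasure_flow_shift[OF sets_successful_a_event, where k = k])
  fix w assume "w \<in> space M"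
  then show "(successful (forward (\<theta> k w)) 0 \<and> P (a 0 (\<theta> k w)))
      \<longleftrightarrow> (successful (forward w) k \<and> P (a k w))"
    using successful_flow_shift[of w k 0] a_flow_shift[of w 0 k] by simp
qed

definition jump_generator :: "int \<Rightarrow> 'w set set" where
  "jump_generator i = {a i -` A \<inter> space M | A. A \<in> sets (count_space (UNIV :: nat set))}"

definition jump_sigma :: "int set \<Rightarrow> 'w measure" where
  "jump_sigma I = sigma (space M) (\<Union>i\<in>I. jump_generator i)"

lemma jump_generator_subset: "(\<Union>i\<in>I. jump_generator i) \<subseteq> Pow (space M)"
  unfolding jump_generator_def by auto

lemma space_jump_sigma [simp]: "space (jump_sigma I) = space M"
  unfolding jump_sigma_def using jump_generator_subset by (simp add: space_measure_of_conv)

lemma sets_jump_sigma: "sets (jump_sigma I) = sigma_sets (space M) (\<Union>i\<in>I. jump_generator i)"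
  unfolding jump_sigma_def using jump_generator_subset by (simp add: sets_measure_of_conv)

lemma sets_jump_sigma_subset: "sets (jump_sigma I) \<subseteq> sets M"
  unfolding sets_jump_sigma
  by (rule sets.sigma_sets_subset) (auto simp: jump_generator_def intro: measurable_sets[OF a_meas])

lemma measurable_a_jump_sigma: "i \<in> I \<Longrightarrow> a i \<in> measurable (jump_sigma I) (count_space UNIV)"
  by (rule measurableI) (auto simp: sets_jump_sigma jump_generator_def)

lemma pred_a_jump_sigma: "i \<in> I \<Longrightarrow> Measurable.pred (jump_sigma I) (\<lambda>w. P (a i w))"
  by (rule measurable_compose[OF measurable_a_jump_sigma]) simp_all

lemma pred_successful_jump_sigma:
  assumes "{..<n} \<subseteq> I"
  shows "Measurable.pred (jump_sigma I) (\<lambda>w. successful (forward w) n)"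
proof -
  define b where "b m = (if m \<in> I then a m else (\<lambda>_. 1))" for m
  have b_meas: "b m \<in> measurable (jump_sigma I) (count_space UNIV)" for m
    unfolding b_def using measurable_a_jump_sigma by auto
  have b_pos: "w \<in> space (jump_sigma I) \<Longrightarrow> 1 \<le> b m w" for w m
    unfolding b_def using a_pos by auto
  have "successful (succ_map (\<lambda>m. b m w)) n \<longleftrightarrow> successful (forward w) n" if "w \<in> space M" for w
    by (rule successful_cong_below)
       (use that b_pos forward_gt succ_map_gt assms in \<open>auto simp: b_def succ_map_def\<close>)
  then have "{w \<in> space M. successful (succ_map (\<lambda>m. b m w)) n}
      = {w \<in> space M. successful (forward w) n}"
    by blast
  then show ?thesis
    using sets_successful[where b = b and N = "jump_sigma I" and k = n, OF b_meas b_pos]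
    unfolding pred_def by simp
qed

lemma indep_jump_generator: "indep_sets jump_generator UNIV"
  using a_indep unfolding indep_vars_def2 jump_generator_def by simp

lemma Int_stable_jump_generator: "Int_stable (jump_generator i)"
  unfolding Int_stable_def jump_generator_def
proof safe
  fix A B :: "nat set"
  show "\<exists>C. a i -` A \<inter> space M \<inter> (a i -` B \<inter> space M) = a i -` C \<inter> space M
      \<and> C \<in> sets (count_space UNIV)"
    by (intro exI[of _ "A \<inter> B"]) auto
qed

lemma indep_jump_sigma:
  assumes "I \<inter> J = {}" and "E \<in> sets (jump_sigma I)" and "F \<in> sets (jump_sigma J)"
  shows "prob (E \<inter> F) = prob E * prob F"
proof -
  let ?K = "case_bool I J"
  have "indep_sets (\<lambda>j. sigma_sets (space M) (\<Union>i\<in>?K j. jump_generator i)) UNIV"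
  proof (rule indep_sets_collect_sigma)
    show "indep_sets jump_generator (\<Union>j. ?K j)"
      by (rule indep_sets_mono_index[OF _ indep_jump_generator]) simp
    show "Int_stable (jump_generator i)" for i
      by (rule Int_stable_jump_generator)
    show "disjoint_family_on ?K UNIV"
      using assms(1) unfolding disjoint_family_on_def by (auto split: bool.splits)
  qed
  then have "indep_set (sets (jump_sigma I)) (sets (jump_sigma J))"
    unfolding indep_set_def sets_jump_sigma
    by (rule indep_sets_cong[THEN iffD1, rotated 2]) (auto split: bool.splits)
  then show ?thesis using assms(2,3) by (rule indep_setD)
qed

lemma prob_ones_pos: "0 < prob {w \<in> space M. \<forall>i\<in>{lo..<hi}. a i w = 1}"
proof -
  define A where "A i = a i -` {1} \<inter> space M" for i
  have "{w \<in> space M. \<forall>i\<in>{lo..<hi}. a i w = 1} = space M \<inter> (\<Inter>i\<in>{lo..<hi}. A i)"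
    unfolding A_def by auto
  moreover have "prob (space M \<inter> (\<Inter>i\<in>{lo..<hi}. A i)) = (\<Prod>i\<in>{lo..<hi}. prob (A i))"
  proof (cases "lo < hi")
    case True
    have "prob (\<Inter>i\<in>{lo..<hi}. A i) = (\<Prod>i\<in>{lo..<hi}. prob (A i))"
      by (rule indep_setsD[OF indep_jump_generator]) (use True in \<open>auto simp: A_def jump_generator_def\<close>)
    then show ?thesis using True unfolding A_def by (simp add: Int_absorb1 INT_subset_iff)
  qed (simp add: prob_space)
  moreover have "0 < prob (A i)" for i
  proof -
    have "A i = {w \<in> space M. a i w = 1}" unfolding A_def by auto
    then have "emeasure M (A i) = emeasure M {w \<in> space M. a 0 w = 1}"
      using emeasure_a_event[of "\<lambda>x. x = 1" i] by simp
    then show ?thesis using a_one unfolding measure_def by simp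
  qed
  ultimately show ?thesis by (simp add: prod_pos)
qed

lemma sum_emeasure_a_gt: "(\<Sum>j. emeasure M {w \<in> space M. j < a 0 w}) = ennreal (\<integral>w. real (a 0 w) \<partial>M)"
  using nn_integral_nat_function[OF a_meas] nn_integral_eq_integral[OF a_int]
  by (simp add: ennreal_of_nat_eq_real_of_nat)

lemma crossing_finite_AE: "AE w in M. finite (crossing (forward w) 0)"
proof -
  define B where "B j = {w \<in> space M. j < a (- int j) w}" for j :: nat
  have B_sets: "B j \<in> sets M" for j
    unfolding B_def by (rule sets_a_event)
  have "emeasure M (B j) = emeasure M {w \<in> space M. j < a 0 w}" for j
    unfolding B_def by (rule emeasure_a_event)
  then have "(\<Sum>j. ennreal (measure M (B j))) = (\<Sum>j. emeasure M {w \<in> space M. j < a 0 w})"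
    by (simp add: emeasure_eq_measure)
  then have "summable (\<lambda>j. measure M (B j))"
    using sum_emeasure_a_gt by (intro summable_suminf_not_top) simp_all
  then have "AE w in M. eventually (\<lambda>j. w \<in> space M - B j) sequentially"
    using B_sets by (intro borel_cantelli_AE1) (simp_all add: emeasure_eq_measure)
  then show ?thesis
  proof (rule AE_mp, intro AE_I2 impI)
    fix w assume "w \<in> space M" and "eventually (\<lambda>j. w \<in> space M - B j) sequentially"
    then obtain N where N: "\<And>j. N \<le> j \<Longrightarrow> a (- int j) w \<le> j"
      unfolding eventually_sequentially B_def by (auto simp: not_less)
    have "crossing (forward w) 0 \<subseteq> {- int N..0}"
    proof
      fix n assume "n \<in> crossing (forward w) 0"
      then have "n \<le> 0" and "nat (- n) < a (- int (nat (- n))) w"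
        unfolding crossing_def succ_map_def by auto
      then show "n \<in> {- int N..0}" using N[of "nat (- n)"] by fastforce
    qed
    then show "finite (crossing (forward w) 0)" using finite_subset by blast
  qed
qed

section \<open>Collisions of successful paths\<close>

lemma forward_flow_shift: "w \<in> space M \<Longrightarrow> forward (\<theta> k w) u = forward w (u + k) - k"
  by (simp add: succ_map_def a_flow_shift)

definition successful_collision :: "'w \<Rightarrow> int \<Rightarrow> bool" where
  "successful_collision w z \<longleftrightarrow> (\<exists>u v. u \<noteq> v \<and> successful (forward w) u \<and> successful (forward w) v
     \<and> forward w u = z \<and> forward w v = z)"

lemma sets_successful_collision: "{w \<in> space M. successful_collision w z} \<in> sets M"
proof -
  have "Measurable.pred M (\<lambda>w. \<exists>u v. u \<noteq> v \<and> successful (forward w) u \<and> successful (forward w) v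
      \<and> u + int (a u w) = z \<and> v + int (a v w) = z)"
    by (intro pred_intros_countable pred_intros_logic(3) measurable_const pred_successful_event
        pred_a_event) simp
  then show ?thesis unfolding pred_def successful_collision_def succ_map_def .
qed

lemma successful_collision_flow_shift:
  assumes "w \<in> space M"
  shows "successful_collision (\<theta> k w) z \<longleftrightarrow> successful_collision w (z + k)"
proof -
  have "successful_collision (\<theta> k w) z \<longleftrightarrow> (\<exists>u v. u + k \<noteq> v + k
      \<and> successful (forward w) (u + k) \<and> successful (forward w) (v + k)
      \<and> forward w (u + k) = z + k \<and> forward w (v + k) = z + k)"
    unfolding successful_collision_def forward_flow_shift[OF assms]
      successful_flow_shift[OF assms] by (simp add: diff_eq_eq)
  also have "\<dots> \<longleftrightarrow> successful_collision w (z + k)"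
  proof
    assume "successful_collision w (z + k)"
    then obtain u v where "u \<noteq> v" "successful (forward w) u" "successful (forward w) v"
      "forward w u = z + k" "forward w v = z + k"
      unfolding successful_collision_def by blast
    then show "\<exists>u v. u + k \<noteq> v + k \<and> successful (forward w) (u + k) \<and> successful (forward w) (v + k)
        \<and> forward w (u + k) = z + k \<and> forward w (v + k) = z + k"
      by (intro exI[of _ "u - k"] exI[of _ "v - k"]) simp
  qed (unfold successful_collision_def, metis add_right_cancel)
  finally show ?thesis .
qed

lemma no_successful_collision_at_one_AE: "AE w in M. \<not> successful_collision w 1"
proof -
  define feeds where
    "feeds j = {w \<in> space M. successful (forward w) (- int j) \<and> a (- int j) w = Suc j}" for j
  define count where "count w = (\<Sum>j. indicator (feeds j) w :: ennreal)" for w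
  define hit where "hit w = (indicator {w \<in> space M. successful (forward w) 1} w :: ennreal)" for w
  have feeds_sets: "feeds j \<in> sets M" for j
    unfolding feeds_def by (rule sets_successful_a_event)
  have count_meas: "count \<in> borel_measurable M"
    unfolding count_def using feeds_sets by measurable
  have hit_meas: "hit \<in> borel_measurable M"
    unfolding hit_def using sets_successful_event by measurable
  have in_feeds: "u = - int (nat (- u)) \<and> w \<in> feeds (nat (- u))"
    if "w \<in> space M" "successful (forward w) u" "forward w u = 1" for w u
    using that forward_gt[OF that(1), of u] unfolding feeds_def succ_map_def by auto
  have count_ge: "(\<Sum>j\<in>J. indicator (feeds j) w) \<le> count w" if "finite J" for J w
    unfolding count_def using that by (intro sum_le_suminf) auto

  have "(\<integral>\<^sup>+ w. count w \<partial>M) = (\<Sum>j. emeasure M (feeds j))"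
    unfolding count_def using feeds_sets by (simp add: nn_integral_suminf)
  also have "\<dots> = (\<Sum>j. emeasure M {w \<in> space M. successful (forward w) 0 \<and> a 0 w = Suc j})"
  proof -
    have "emeasure M (feeds j)
        = emeasure M {w \<in> space M. successful (forward w) 0 \<and> a 0 w = Suc j}" for j
      unfolding feeds_def by (rule emeasure_successful_a_event)
    then show ?thesis by simp
  qed
  also have "\<dots> = emeasure M (\<Union>j. {w \<in> space M. successful (forward w) 0 \<and> a 0 w = Suc j})"
    by (rule suminf_emeasure) (auto simp: disjoint_family_on_def intro: sets_successful_a_event)
  also have "(\<Union>j. {w \<in> space M. successful (forward w) 0 \<and> a 0 w = Suc j})
      = {w \<in> space M. successful (forward w) 0}"
    using a_pos by (auto simp: Suc_le_eq gr0_conv_Suc)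
  also have "emeasure M {w \<in> space M. successful (forward w) 0}
      = emeasure M {w \<in> space M. successful (forward w) 1}"
    by (rule emeasure_flow_shift[OF sets_successful_event, where k = 1, symmetric])
       (simp add: successful_flow_shift)
  also have "\<dots> = (\<integral>\<^sup>+ w. hit w \<partial>M)"
    unfolding hit_def using sets_successful_event by simp
  finally have integrals_eq: "(\<integral>\<^sup>+ w. count w \<partial>M) = (\<integral>\<^sup>+ w. hit w \<partial>M)" .

  have "AE w in M. hit w \<le> count w"
    using crossing_finite_AE
  proof (rule AE_mp, intro AE_I2 impI)
    fix w assume w: "w \<in> space M" and fin: "finite (crossing (forward w) 0)"
    show "hit w \<le> count w"
    proof (cases "successful (forward w) 1")
      case True
      have "finite (forward w -` {0 + 1})"
        using preimage_subset_crossing[OF forward_gt[OF w]] fin by (rule finite_subset)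
      then obtain u where "forward w u = 1" "successful (forward w) u"
        using successful_preimage True by fastforce
      then have "w \<in> feeds (nat (- u))" using in_feeds w by blast
      then show ?thesis
        using count_ge[of "{nat (- u)}" w] w True unfolding hit_def by simp
    qed (simp add: hit_def)
  qed
  moreover have "(\<integral>\<^sup>+ w. hit w \<partial>M) \<noteq> \<infinity>"
    unfolding hit_def using sets_successful_event by (simp add: emeasure_eq_measure)
  ultimately have "AE w in M. count w \<le> hit w"
    using nn_integral_less[OF hit_meas count_meas] integrals_eq by (metis order_less_irrefl)
  then show ?thesis
  proof (rule AE_mp, intro AE_I2 impI notI)
    fix w assume w: "w \<in> space M" and le: "count w \<le> hit w" and "successful_collision w 1"
    then obtain u v where uv: "u \<noteq> v" "successful (forward w) u" "successful (forward w) v"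
      "forward w u = 1" "forward w v = 1"
      unfolding successful_collision_def by blast
    then have "nat (- u) \<noteq> nat (- v)" "w \<in> feeds (nat (- u))" "w \<in> feeds (nat (- v))"
      using in_feeds[OF w] by metis+
    then have "2 \<le> count w"
      using count_ge[of "{nat (- u), nat (- v)}" w] by simp
    moreover have "hit w \<le> 1" unfolding hit_def by (simp add: indicator_def)
    ultimately have "(2 :: ennreal) \<le> 1" using le by (meson order_trans)
    then show False by simp
  qed
qed

lemma no_successful_collision_AE: "AE w in M. \<forall>z. \<not> successful_collision w z"
proof -
  have AE_iff: "(AE w in M. \<not> successful_collision w z)
      \<longleftrightarrow> emeasure M {w \<in> space M. successful_collision w z} = 0" for z
    by (rule AE_iff_measurable[OF sets_successful_collision]) simp
  have "emeasure M {w \<in> space M. successful_collision w z}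
      = emeasure M {w \<in> space M. successful_collision w 1}" for z
    by (rule emeasure_flow_shift[OF sets_successful_collision, where k = "z - 1"])
       (simp add: successful_collision_flow_shift)
  then show ?thesis
    using no_successful_collision_at_one_AE by (simp add: AE_iff AE_all_countable)
qed

lemma successful_collision_if_ones_between:
  assumes w: "w \<in> space M"
    and crossing: "n \<in> crossing (forward w) 0" "n' \<in> crossing (forward w) 0" "n \<noteq> n'"
    and successful: "successful (forward w) n" "successful (forward w) n'"
    and le: "forward w n \<le> forward w n'"
    and ones: "\<forall>i\<in>{forward w n..<forward w n'}. a i w = 1"
  shows "\<exists>z. successful_collision w z"
proof -
  let ?f = "forward w"
  define d where "d = nat (?f n' - ?f n)"
  have d: "?f n + int d = ?f n'"
    using le by (simp add: d_def)
  have "(?f ^^ d) (?f n) = ?f n + int d"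
  proof (rule succ_map_funpow_ones)
    fix i assume "?f n \<le> i" "i < ?f n + int d"
    then show "a i w = 1" by (intro bspec[OF ones]) (simp add: d)
  qed
  then have "(?f ^^ Suc d) n = (?f ^^ 1) n'"
    using d by (simp add: funpow_Suc_right del: funpow.simps)
  then obtain u v where "u \<noteq> v" "successful ?f u" "successful ?f v" "?f u = ?f v"
    using crossing_orbits_merge[OF forward_gt[OF w] crossing successful] by blast
  then show ?thesis unfolding successful_collision_def by blast
qed

lemma successful_collision_if_ones_between_images:
  assumes w: "w \<in> space M"
    and crossing: "n \<in> crossing (forward w) 0" "n' \<in> crossing (forward w) 0" "n \<noteq> n'"
    and successful: "successful (forward w) n" "successful (forward w) n'"
    and ones: "\<forall>i\<in>{min (forward w n) (forward w n')..<max (forward w n) (forward w n')}. a i w = 1"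
  shows "\<exists>z. successful_collision w z"
proof (cases "forward w n \<le> forward w n'")
  case True
  moreover have "\<forall>i\<in>{forward w n..<forward w n'}. a i w = 1"
    using ones unfolding min_absorb1[OF True] max_absorb2[OF True] .
  ultimately show ?thesis
    by (rule successful_collision_if_ones_between[OF w crossing successful])
next
  case False
  then have le: "forward w n' \<le> forward w n" by simp
  moreover have "\<forall>i\<in>{forward w n'..<forward w n}. a i w = 1"
    using ones unfolding min_absorb2[OF le] max_absorb1[OF le] .
  ultimately show ?thesis
    using successful_collision_if_ones_between[OF w crossing(2,1) crossing(3)[symmetric] successful(2,1)]
    by blast
qed

text \<open>The event is determined by the jumps at sites \<open>\<le> 0\<close>; it is independent of the
  event, of positive probability, that all jumps between x and y equal 1, on which
  the two successful paths collide.\<close>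
lemma successful_crossing_pair_null:
  assumes "n \<noteq> n'" "n \<le> 0" "n' \<le> 0" "0 < x" "0 < y"
  shows "{w \<in> space M. successful (forward w) n \<and> successful (forward w) n'
      \<and> forward w n = x \<and> forward w n' = y} \<in> null_sets M"
    (is "?E \<in> null_sets M")
proof -
  define F where "F = {w \<in> space M. \<forall>i\<in>{min x y..<max x y}. a i w = 1}"
  have "Measurable.pred (jump_sigma {..0}) (\<lambda>w. successful (forward w) n \<and> successful (forward w) n'
      \<and> n + int (a n w) = x \<and> n' + int (a n' w) = y)"
    using assms by (intro pred_intros_logic(3) pred_successful_jump_sigma pred_a_jump_sigma) auto
  then have E_sets: "?E \<in> sets (jump_sigma {..0})"
    unfolding pred_def succ_map_def by simp
  have "Measurable.pred (jump_sigma {1..}) (\<lambda>w. \<forall>i\<in>{min x y..<max x y}. a i w = 1)"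
    using assms by (intro pred_intros_countable_bounded(3) pred_a_jump_sigma) auto
  then have F_sets: "F \<in> sets (jump_sigma {1..})"
    unfolding pred_def F_def by simp
  have "AE w in M. w \<notin> ?E \<inter> F"
    using no_successful_collision_AE
  proof (rule AE_mp, intro AE_I2 impI notI)
    fix w assume w: "w \<in> space M" and no_collision: "\<forall>z. \<not> successful_collision w z"
      and "w \<in> ?E \<inter> F"
    then have successful: "successful (forward w) n" "successful (forward w) n'"
      and images: "forward w n = x" "forward w n' = y"
      and ones: "\<forall>i\<in>{min x y..<max x y}. a i w = 1"
      unfolding F_def by blast+
    have crossing: "n \<in> crossing (forward w) 0" "n' \<in> crossing (forward w) 0"
      using images assms unfolding crossing_def by simp_all
    have "\<forall>i\<in>{min (forward w n) (forward w n')..<max (forward w n) (forward w n')}. a i w = 1"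
      using ones unfolding images .
    then show False
      using successful_collision_if_ones_between_images[OF w crossing assms(1) successful]
        no_collision by blast
  qed
  moreover have "?E \<inter> F \<in> sets M"
    using E_sets F_sets sets_jump_sigma_subset by blast
  ultimately have "?E \<inter> F \<in> null_sets M"
    using AE_iff_null_sets by blast
  then have "prob ?E * prob F = 0"
    using indep_jump_sigma[OF _ E_sets F_sets] measure_eq_0_null_sets by fastforce
  then have "prob ?E = 0"
    using prob_ones_pos[of "min x y" "max x y"] unfolding F_def by simp
  then show ?thesis
    using E_sets sets_jump_sigma_subset by (intro null_setsI) (auto simp: emeasure_eq_measure)
qed

lemma unique_successful_in_crossing_AE:
  "AE w in M. \<forall>n\<in>crossing (forward w) 0. \<forall>n'\<in>crossing (forward w) 0.
     successful (forward w) n \<and> successful (forward w) n' \<longrightarrow> n = n'"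
proof (rule AE_I')
  let ?I = "{(n, n', x, y). n \<noteq> n' \<and> n \<le> 0 \<and> n' \<le> (0::int) \<and> 0 < (x::int) \<and> 0 < (y::int)}"
  let ?E = "\<lambda>(n, n', x, y). {w \<in> space M. successful (forward w) n \<and> successful (forward w) n'
      \<and> forward w n = x \<and> forward w n' = y}"
  show "(\<Union>i\<in>?I. ?E i) \<in> null_sets M"
  proof (rule null_sets_UN')
    show "countable ?I"
      by (rule countable_subset[OF subset_UNIV countableI_type])
  next
    fix i assume "i \<in> ?I"
    then obtain n n' x y where "i = (n, n', x, y)" "n \<noteq> n'" "n \<le> 0" "n' \<le> 0" "0 < x" "0 < y"
      by blast
    then show "?E i \<in> null_sets M" using successful_crossing_pair_null by simp
  qed
  show "{w \<in> space M. \<not> (\<forall>n\<in>crossing (forward w) 0. \<forall>n'\<in>crossing (forward w) 0.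
      successful (forward w) n \<and> successful (forward w) n' \<longrightarrow> n = n')} \<subseteq> (\<Union>i\<in>?I. ?E i)"
  proof
    fix w assume "w \<in> {w \<in> space M. \<not> (\<forall>n\<in>crossing (forward w) 0. \<forall>n'\<in>crossing (forward w) 0.
      successful (forward w) n \<and> successful (forward w) n' \<longrightarrow> n = n')}"
    then obtain n n' where "w \<in> space M" "n \<in> crossing (forward w) 0" "n' \<in> crossing (forward w) 0"
      "successful (forward w) n" "successful (forward w) n'" "n \<noteq> n'"
      by blast
    then show "w \<in> (\<Union>i\<in>?I. ?E i)"
      unfolding crossing_def by (intro UN_I[of "(n, n', forward w n, forward w n')"]) auto
  qed
qed

section \<open>The intensity of successful sites\<close>

lemma sum_successful_crossing_AE:
  "AE w in M. (\<Sum>j. indicator {w \<in> space M. successful (forward w) (- int j) \<and> j < a (- int j) w} w)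
     = (1 :: ennreal)"
  using crossing_finite_AE unique_successful_in_crossing_AE
proof (rule AE_mp[OF AE_conjI], intro AE_I2 impI)
  fix w assume w: "w \<in> space M" and "finite (crossing (forward w) 0) \<and>
    (\<forall>n\<in>crossing (forward w) 0. \<forall>n'\<in>crossing (forward w) 0.
       successful (forward w) n \<and> successful (forward w) n' \<longrightarrow> n = n')"
  then have fin: "finite (crossing (forward w) 0)" and unique: "\<And>n n'. n \<in> crossing (forward w) 0
      \<Longrightarrow> n' \<in> crossing (forward w) 0 \<Longrightarrow> successful (forward w) n \<Longrightarrow> successful (forward w) n'
      \<Longrightarrow> n = n'"
    by blast+
  obtain n where n: "n \<in> crossing (forward w) 0" "successful (forward w) n"
    using crossing_has_successful[OF forward_gt[OF w] fin] by blast
  have crossing_iff: "- int j \<in> crossing (forward w) 0 \<longleftrightarrow> j < a (- int j) w" for j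
    unfolding crossing_def succ_map_def by auto
  define j0 where "j0 = nat (- n)"
  have n_eq: "- int j0 = n"
    using n(1) unfolding crossing_def j0_def by simp
  have "successful (forward w) (- int j) \<and> j < a (- int j) w \<longleftrightarrow> j = j0" for j
    using unique[OF n(1), of "- int j"] n crossing_iff[of j] crossing_iff[of j0]
    unfolding n_eq[symmetric] by auto
  then have "indicator {w \<in> space M. successful (forward w) (- int j) \<and> j < a (- int j) w} w
      = (if j = j0 then 1 else 0 :: ennreal)" for j
    using w by (simp add: indicator_def)
  then show "(\<Sum>j. indicator {w \<in> space M. successful (forward w) (- int j) \<and> j < a (- int j) w} w)
      = (1 :: ennreal)"
    using sums_unique[OF sums_single[of j0 "\<lambda>_. 1 :: ennreal"]] by simp
qed

text \<open>The mass-transport identity: the site 0 is crossed by exactly one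
  successful jump, and the successful site -j does so iff it jumps farther than j.\<close>
lemma emeasure_successful_mult_mean:
  "emeasure M {w \<in> space M. successful (forward w) 0} * ennreal (\<integral>w. real (a 0 w) \<partial>M) = 1"
proof -
  let ?S = "{w \<in> space M. successful (forward w) 0}"
  define B where "B j = {w \<in> space M. successful (forward w) (- int j) \<and> j < a (- int j) w}" for j
  have B_sets: "B j \<in> sets M" for j
    unfolding B_def by (rule sets_successful_a_event)
  have S_indep: "emeasure M {w \<in> space M. successful (forward w) 0 \<and> j < a 0 w}
      = emeasure M ?S * emeasure M {w \<in> space M. j < a 0 w}" for j
  proof -
    have "?S \<in> sets (jump_sigma {..<0})"
      using pred_successful_jump_sigma[of 0 "{..<0}"] unfolding pred_def by simp
    moreover have "{w \<in> space M. j < a 0 w} \<in> sets (jump_sigma {0})"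
      using pred_a_jump_sigma[of 0 "{0}" "\<lambda>x. j < x"] unfolding pred_def by simp
    ultimately have "prob (?S \<inter> {w \<in> space M. j < a 0 w}) = prob ?S * prob {w \<in> space M. j < a 0 w}"
      by (intro indep_jump_sigma) auto
    moreover have "?S \<inter> {w \<in> space M. j < a 0 w} = {w \<in> space M. successful (forward w) 0 \<and> j < a 0 w}"
      by auto
    ultimately show ?thesis by (simp add: emeasure_eq_measure ennreal_mult)
  qed
  have "1 = (\<integral>\<^sup>+ w. 1 \<partial>M)" by (simp add: emeasure_space_1)
  also have "\<dots> = (\<integral>\<^sup>+ w. (\<Sum>j. indicator (B j) w) \<partial>M)"
    by (rule nn_integral_cong_AE) (use sum_successful_crossing_AE in \<open>auto simp: B_def elim: AE_mp\<close>)
  also have "\<dots> = (\<Sum>j. emeasure M (B j))"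
    using B_sets by (simp add: nn_integral_suminf)
  also have "\<dots> = (\<Sum>j. emeasure M {w \<in> space M. successful (forward w) 0 \<and> j < a 0 w})"
  proof -
    have "emeasure M (B j) = emeasure M {w \<in> space M. successful (forward w) 0 \<and> j < a 0 w}" for j
      unfolding B_def by (rule emeasure_successful_a_event)
    then show ?thesis by simp
  qed
  also have "\<dots> = emeasure M ?S * (\<Sum>j. emeasure M {w \<in> space M. j < a 0 w})"
    by (simp add: S_indep ennreal_suminf_cmult)
  also have "\<dots> = emeasure M ?S * ennreal (\<integral>w. real (a 0 w) \<partial>M)"
    by (simp add: sum_emeasure_a_gt)
  finally show ?thesis by simp
qed

lemma prob_successful: "prob {w \<in> space M. successful (forward w) 0} = 1 / (\<integral>w. real (a 0 w) \<partial>M)"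
proof -
  let ?E = "\<integral>w. real (a 0 w) \<partial>M"
  have "0 \<le> ?E" by simp
  then have "ennreal (prob {w \<in> space M. successful (forward w) 0} * ?E) = 1"
    using emeasure_successful_mult_mean by (simp add: emeasure_eq_measure ennreal_mult)
  then have "prob {w \<in> space M. successful (forward w) 0} * ?E = 1"
    using \<open>0 \<le> ?E\<close> by (simp add: ennreal_eq_1)
  moreover from this have "?E \<noteq> 0" by (metis mult_zero_right zero_neq_one)
  ultimately show ?thesis by (intro eq_divide_imp)
qed

end

theorem mainTheorem8:
  fixes M :: "'w measure" and \<theta> :: "int \<Rightarrow> 'w \<Rightarrow> 'w" and a :: "int \<Rightarrow> 'w \<Rightarrow> nat"
  assumes "prob_space M"
    and flow_meas: "\<And>n. \<theta> n \<in> measurable M M"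
    and flow_pres: "\<And>n. distr M M (\<theta> n) = M"
    and flow_zero: "\<And>w. w \<in> space M \<Longrightarrow> \<theta> 0 w = w"
    and flow_add: "\<And>m n w. w \<in> space M \<Longrightarrow> \<theta> (m + n) w = \<theta> m (\<theta> n w)"
    and a_meas: "\<And>n. a n \<in> measurable M (count_space UNIV)"
    and a_compat: "\<And>n w. w \<in> space M \<Longrightarrow> a n w = a 0 (\<theta> n w)"
    and a_indep: "prob_space.indep_vars M (\<lambda>_. count_space UNIV) a UNIV"
    and a_ident: "\<And>n. distr M (count_space UNIV) (a n) = distr M (count_space UNIV) (a 0)"
    and a_pos: "\<And>n w. w \<in> space M \<Longrightarrow> a n w \<ge> 1"
    and a_int: "integrable M (\<lambda>w. real (a 0 w))"
    and a_one: "measure M {w \<in> space M. a 0 w = 1} > 0"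
  shows "measure M {w \<in> space M. successful (succ_map (\<lambda>n. a n w)) 0}
           = 1 / (\<integral>w. real (a 0 w) \<partial>M)
       \<and> measure M {w \<in> space M. ephemeral (succ_map (\<lambda>n. a n w)) 0}
           = 1 - 1 / (\<integral>w. real (a 0 w) \<partial>M)"
proof -
  interpret iid_jump_flow M \<theta> a
    by (intro iid_jump_flow.intro iid_jump_flow_axioms.intro) (fact assms)+
  have "{w \<in> space M. ephemeral (succ_map (\<lambda>n. a n w)) 0}
      = space M - {w \<in> space M. successful (succ_map (\<lambda>n. a n w)) 0}"
    unfolding ephemeral_def successful_def by auto
  then show ?thesis
    using prob_successful prob_compl[OF sets_successful_event] by simp
qed

end
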